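(* Let $d=(d_1,\dots,d_n)$ be a degree sequence in nonincreasing order and let $e$ be obtained from $d$ by a unit transformation at indices $r<t$: $e_r=d_r-1$, $e_t=d_t+1$, $e_i=d_i$ for $i\notin\{r,t\}$, where $d_r\ge d_t+2$, $t$ is the first index after $r$ with $d_t\le d_r-2$, and $r$ is the last index before $t$ with $d_r\ge d_t+2$ (a trailing $0$ is appended to $d$ if needed, so $d$ and $e$ both have $n$ terms; then $e$ is again nonincreasing). Define $j_r=d_r+1$ if $d_r\ge r$ and $j_r=d_r$ if $d_r<r$; and $j_t=d_t+2$ if $d_t\ge t-1$ and $j_t=d_t+1$ if $d_t<t-1$. For an integer $k$, let $c_1(k)$ be the number of elements of the multiset $\{r,j_t\}$ that are $\le k$ (counted with multiplicity), and $c_{-1}(k)$ the number of elements of the multiset $\{t,j_r\}$ that are $\le k$ (counted with multiplicity). Then: (a) for every $k\le\min\{m(d),m(e)\}$, $\Delta_k(e)=\Delta_k(d)+c_1(k)-c_{-1}(k)$; (b) if $m(e)>m(d)$, then $\Delta_{m(e)}(e)=\Delta_{m(d)}(d)+2$.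
   Context: Degree sequences (of finite simple graphs, terms may be $0$) are listed in nonincreasing order. $m(d)=\max\{i : d_i\ge i-1\}$. For integers $k\ge 0$, $\Delta_k(d)=k(k-1)+\sum_{i>k}\min\{k,d_i\}-\sum_{i\le k}d_i$. *)

theory Defs
  imports Main
begin

text \<open>A sequence with n terms is a function d :: nat => nat, of which only the
values d 1, ..., d n (1-indexed) are relevant.\<close>

definition nonincr_seq :: "nat \<Rightarrow> (nat \<Rightarrow> nat) \<Rightarrow> bool" where
  "nonincr_seq n d \<longleftrightarrow> (\<forall>i j. 1 \<le> i \<longrightarrow> i \<le> j \<longrightarrow> j \<le> n \<longrightarrow> d j \<le> d i)"

definition graphic_seq :: "nat \<Rightarrow> (nat \<Rightarrow> nat) \<Rightarrow> bool" where
  "graphic_seq n d \<longleftrightarrow> (\<exists>E :: nat \<Rightarrow> nat \<Rightarrow> bool.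
      (\<forall>i j. E i j \<longrightarrow> i \<in> {1..n} \<and> j \<in> {1..n}) \<and>
      (\<forall>i j. E i j \<longrightarrow> E j i) \<and> (\<forall>i. \<not> E i i) \<and>
      (\<forall>i \<in> {1..n}. card {j \<in> {1..n}. E i j} = d i))"

definition degseq :: "nat \<Rightarrow> (nat \<Rightarrow> nat) \<Rightarrow> bool" where
  "degseq n d \<longleftrightarrow> nonincr_seq n d \<and> graphic_seq n d"

definition mval :: "nat \<Rightarrow> (nat \<Rightarrow> nat) \<Rightarrow> nat" where
  "mval n d = Max {i \<in> {1..n}. int (d i) \<ge> int i - 1}"

definition Delta :: "nat \<Rightarrow> (nat \<Rightarrow> nat) \<Rightarrow> nat \<Rightarrow> int" where
  "Delta n d k = int k * (int k - 1) + (\<Sum>i\<in>{k<..n}. int (min k (d i)))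
                  - (\<Sum>i\<in>{1..k}. int (d i))"

end

theory Submission imports Defs begin

text \<open>Only the terms at r and t of Delta_k change: in the head sum by -1 resp. +1 when
  r <= k resp. t <= k, in the tail sum of min k d_i by -1 resp. +1 exactly when k < r with
  d_r <= k resp. k < t with d_t < k. For k <= m we have d_k >= k - 1, and since every d_i
  strictly between r and t equals d_r - 1 = d_t + 1, these tail conditions collapse to the
  thresholds j_r <= k and j_t <= k. If m increases, the new value of m must be t with
  d_t = t - 2, the old one is t - 1, and Delta_t - Delta_(t-1) = 2 because all later terms
  are at most t - 2.\<close>

lemma sum_eq_except_two:
  fixes h h' :: "'a \<Rightarrow> 'b::ab_group_add"
  assumes "finite A" "a \<noteq> b" "\<And>i. i \<noteq> a \<Longrightarrow> i \<noteq> b \<Longrightarrow> h i = h' i"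
  shows "sum h A = sum h' A + (if a \<in> A then h a - h' a else 0) + (if b \<in> A then h b - h' b else 0)"
proof -
  have "sum (\<lambda>i. h i - h' i) A = sum (\<lambda>i. h i - h' i) (A \<inter> {a, b})"
    using assms by (intro sum.mono_neutral_right) auto
  also have "\<dots> = (if a \<in> A then h a - h' a else 0) + (if b \<in> A then h b - h' b else 0)"
    using assms(2) by (cases "a \<in> A"; cases "b \<in> A") (auto simp: Int_insert_right)
  finally show ?thesis by (simp add: sum_subtractf algebra_simps)
qed

lemma Delta_unit_transfer:
  fixes n r t k :: nat and d :: "nat \<Rightarrow> nat"
  assumes "1 \<le> r" "r < t" "t \<le> n" "d r \<ge> 1"
  shows "Delta n (d(r := d r - 1, t := d t + 1)) k = Delta n d k
     + (if r \<le> k then 1 else 0) - (if t \<le> k then 1 else 0)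
     - (if k < r \<and> d r \<le> k then 1 else 0) + (if k < t \<and> d t + 1 \<le> k then 1 else 0)"
proof -
  let ?e = "d(r := d r - 1, t := d t + 1)"
  have "r \<noteq> t" using assms by simp
  then have eq_off: "\<And>i. i \<noteq> r \<Longrightarrow> i \<noteq> t \<Longrightarrow> ?e i = d i" by simp
  have tail: "(\<Sum>i\<in>{k<..n}. int (min k (?e i))) = (\<Sum>i\<in>{k<..n}. int (min k (d i)))
     + (if r \<in> {k<..n} then int (min k (?e r)) - int (min k (d r)) else 0)
     + (if t \<in> {k<..n} then int (min k (?e t)) - int (min k (d t)) else 0)"
    by (rule sum_eq_except_two) (use \<open>r \<noteq> t\<close> eq_off in auto)
  have head: "(\<Sum>i\<in>{1..k}. int (?e i)) = (\<Sum>i\<in>{1..k}. int (d i))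
     + (if r \<in> {1..k} then int (?e r) - int (d r) else 0)
     + (if t \<in> {1..k} then int (?e t) - int (d t) else 0)"
    by (rule sum_eq_except_two) (use \<open>r \<noteq> t\<close> eq_off in auto)
  show ?thesis unfolding Delta_def tail head using assms by (auto simp: min_def)
qed

lemma nonincr_seqD:
  "nonincr_seq n d \<Longrightarrow> 1 \<le> i \<Longrightarrow> i \<le> j \<Longrightarrow> j \<le> n \<Longrightarrow> d j \<le> d i"
  by (auto simp: nonincr_seq_def)

lemma mval_in:
  assumes "1 \<le> n"
  shows "mval n d \<in> {1..n}" "int (d (mval n d)) \<ge> int (mval n d) - 1"
proof -
  have "mval n d \<in> {i \<in> {1..n}. int (d i) \<ge> int i - 1}"
    unfolding mval_def by (rule Max_in) (use assms in auto)
  then show "mval n d \<in> {1..n}" "int (d (mval n d)) \<ge> int (mval n d) - 1" by auto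
qed

lemma mval_greatest:
  "i \<in> {1..n} \<Longrightarrow> int (d i) \<ge> int i - 1 \<Longrightarrow> i \<le> mval n d"
  unfolding mval_def by (rule Max_ge) auto

lemma nonincr_seq_le_mval:
  assumes "nonincr_seq n d" "1 \<le> n" "1 \<le> k" "k \<le> mval n d"
  shows "int (d k) \<ge> int k - 1"
proof -
  have "d (mval n d) \<le> d k" using nonincr_seqD[OF assms(1)] assms mval_in[OF assms(2)] by auto
  then show ?thesis using mval_in(2)[OF assms(2), of d] assms(4) by linarith
qed

lemma Delta_step_down:
  assumes "nonincr_seq n d" "t \<le> n" "d t + 2 = t"
  shows "Delta n d t = Delta n d (t - 1) + 2"
proof -
  have tail_small: "min k (d i) = d i" if "i \<in> {t<..n}" "t - 1 \<le> k" for i k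
    using nonincr_seqD[OF assms(1), of t i] that assms(3) by auto
  have "{t - 1<..n} = insert t {t<..n}" "{1..t} = insert t {1..t - 1}"
    using assms by auto
  moreover have "(\<Sum>i\<in>{t<..n}. int (min t (d i))) = (\<Sum>i\<in>{t<..n}. int (d i))"
    "(\<Sum>i\<in>{t<..n}. int (min (t - 1) (d i))) = (\<Sum>i\<in>{t<..n}. int (d i))"
    using tail_small by (auto intro!: sum.cong)
  ultimately show ?thesis unfolding Delta_def using assms(3) by (simp add: algebra_simps of_nat_diff)
qed

locale unit_transformation =
  fixes n r t :: nat and d e :: "nat \<Rightarrow> nat"
  assumes nonincr: "nonincr_seq n d"
    and range: "1 \<le> r" "r < t" "t \<le> n"
    and gap: "d r \<ge> d t + 2"
    and first: "\<forall>i. r < i \<and> i < t \<longrightarrow> \<not> (d i + 2 \<le> d r)"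
    and last: "\<forall>i. r < i \<and> i < t \<longrightarrow> \<not> (d i \<ge> d t + 2)"
    and e_def: "e = d(r := d r - 1, t := d t + 1)"
begin

definition jr :: nat where "jr = (if d r \<ge> r then d r + 1 else d r)"

definition jt :: nat where "jt = (if int (d t) \<ge> int t - 1 then d t + 2 else d t + 1)"

lemma e_at: "e r = d r - 1" "e t = d t + 1" "i \<noteq> r \<Longrightarrow> i \<noteq> t \<Longrightarrow> e i = d i"
  using e_def range by auto

lemma d_between:
  assumes "r < i" "i < t"
  shows "d i + 1 = d r" "d i = d t + 1"
proof -
  have "d t \<le> d i" "d i \<le> d r" using nonincr_seqD[OF nonincr] assms range by auto
  then show "d i + 1 = d r" "d i = d t + 1" using first last assms gap by force+
qed

lemma nonincr_e: "nonincr_seq n e"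
  unfolding nonincr_seq_def
proof (intro allI impI)
  fix i j assume ij: "1 \<le> i" "i \<le> j" "j \<le> n"
  have dij: "d j \<le> d i" using nonincr_seqD[OF nonincr] ij by auto
  consider "i = j" | "i = r" "j = t" | "i = r" "r < j" "j < t" | "i = r" "t < j"
    | "i < r" "j = t" | "r < i" "i < t" "j = t" | "i \<noteq> r" "j \<noteq> t"
    using ij by linarith
  then show "e j \<le> e i"
  proof cases
    case 3 then show ?thesis using e_at d_between[of j] by simp
  next
    case 4 then show ?thesis using e_at nonincr_seqD[OF nonincr, of t j] range gap ij by simp
  next
    case 5 then show ?thesis using e_at nonincr_seqD[OF nonincr, of i r] range gap ij by simp
  next
    case 6 then show ?thesis using e_at d_between[of i] range by simp
  next
    case 7
    have "e j \<le> d j" "d i \<le> e i" using 7 e_at by (cases "j = r"; cases "i = t"; simp)+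
    then show ?thesis using dij by linarith
  qed (use e_at gap in auto)
qed

lemma jr_le_iff:
  assumes "k \<le> n" "int (d k) \<ge> int k - 1" "int (e k) \<ge> int k - 1"
  shows "jr \<le> k \<longleftrightarrow> k < r \<and> d r \<le> k"
proof (cases "d r \<ge> r")
  case True
  have "\<not> d r + 1 \<le> k"
  proof
    assume le: "d r + 1 \<le> k"
    then have "r < k" using True by simp
    then have "d k \<le> d r" using nonincr_seqD[OF nonincr, of r k] range assms by simp
    then have k_eq: "k = d r + 1" using le assms(2) by linarith
    have "k < t"
    proof (rule ccontr)
      assume "\<not> k < t"
      then have "d k \<le> d t" using nonincr_seqD[OF nonincr, of t k] range assms by simp
      then show False using assms(2) gap k_eq by linarith
    qed
    then have "d (r + 1) \<le> d t + 1" using d_between[of "r + 1"] \<open>r < k\<close> by simp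
    moreover have "d k \<le> d (r + 1)" using nonincr_seqD[OF nonincr, of "r + 1" k] \<open>r < k\<close> assms by simp
    ultimately show False using assms(2) gap k_eq by linarith
  qed
  then show ?thesis using True by (auto simp: jr_def)
next
  case False
  have "\<not> (r \<le> k \<and> d r \<le> k)"
  proof
    assume le: "r \<le> k \<and> d r \<le> k"
    then have "d k \<le> d r" using nonincr_seqD[OF nonincr, of r k] range assms by simp
    then have "k = r" using False le assms(2) by linarith
    then have "int (d r) \<ge> int r - 1" "int (e r) \<ge> int r - 1" using assms(2,3) by simp_all
    moreover have "int (e r) = int (d r) - 1" using e_at gap by simp
    ultimately show False using False by linarith
  qed
  then show ?thesis using False by (auto simp: jr_def)
qed

lemma jt_le_iff:
  assumes "k \<le> n" "int (d k) \<ge> int k - 1"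
  shows "jt \<le> k \<longleftrightarrow> k < t \<and> d t + 1 \<le> k"
proof -
  have "d k \<le> d t" if "t \<le> k" using nonincr_seqD[OF nonincr, of t k] range assms that by simp
  then show ?thesis using assms(2) by (cases "t \<le> k") (auto simp: jt_def)
qed

lemma Delta_e:
  "Delta n e k = Delta n d k + (if r \<le> k then 1 else 0) - (if t \<le> k then 1 else 0)
     - (if k < r \<and> d r \<le> k then 1 else 0) + (if k < t \<and> d t + 1 \<le> k then 1 else 0)"
  unfolding e_def using Delta_unit_transfer range gap by simp

lemma Delta_e_le_mval:
  assumes "k \<le> min (mval n d) (mval n e)"
  shows "Delta n e k = Delta n d k + ((if r \<le> k then 1 else 0) + (if jt \<le> k then 1 else 0))
     - ((if t \<le> k then 1 else 0) + (if jr \<le> k then 1 else 0))"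
proof (cases "k = 0")
  case True
  then show ?thesis using Delta_e[of k] range by (simp add: jr_def jt_def)
next
  case False
  have "k \<le> n" using assms mval_in(1)[of n d] range by auto
  moreover have "int (d k) \<ge> int k - 1" "int (e k) \<ge> int k - 1"
    using nonincr_seq_le_mval nonincr nonincr_e assms False range by auto
  ultimately show ?thesis using Delta_e[of k] jr_le_iff[of k] jt_le_iff[of k] False by simp
qed

lemma mval_increase:
  assumes "mval n e > mval n d"
  shows "mval n e = t" "mval n d = t - 1" "d t + 2 = t"
proof -
  let ?q = "mval n e"
  have n: "1 \<le> n" using range by simp
  have q: "?q \<in> {1..n}" "int (e ?q) \<ge> int ?q - 1" using mval_in[OF n] by auto
  have not_d: "\<not> int (d ?q) \<ge> int ?q - 1" using mval_greatest[of ?q n d] q assms by auto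
  show q_t: "?q = t"
  proof (rule ccontr)
    assume "?q \<noteq> t"
    then have "e ?q \<le> d ?q" using e_at by (cases "?q = r") auto
    then show False using q not_d by linarith
  qed
  show dt: "d t + 2 = t" using q not_d q_t e_at by simp
  have "t - 1 \<in> {1..n}" using range by auto
  moreover have "int (d (t - 1)) \<ge> int (t - 1) - 1"
    using gap dt d_between[of "t - 1"] range by (cases "t - 1 = r") auto
  ultimately have "t - 1 \<le> mval n d" by (rule mval_greatest)
  then show "mval n d = t - 1" using assms q_t by simp
qed

lemma Delta_e_mval_increase:
  assumes "mval n e > mval n d"
  shows "Delta n e (mval n e) = Delta n d (mval n d) + 2"
proof -
  have "Delta n e t = Delta n d t" using Delta_e[of t] range by simp
  also have "\<dots> = Delta n d (t - 1) + 2" using Delta_step_down nonincr range mval_increase(3)[OF assms] by simp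
  finally show ?thesis using mval_increase[OF assms] by simp
qed

end

theorem lemma14:
  fixes n r t :: nat and d e :: "nat \<Rightarrow> nat"
  assumes hd: "degseq n d"
    and hrt: "1 \<le> r" "r < t" "t \<le> n"
    and hgap: "d r \<ge> d t + 2"
    and hfirst: "\<forall>i. r < i \<and> i < t \<longrightarrow> \<not> (d i + 2 \<le> d r)"
    and hlast: "\<forall>i. r < i \<and> i < t \<longrightarrow> \<not> (d i \<ge> d t + 2)"
    and he: "e = d(r := d r - 1, t := d t + 1)"
  shows
    "let jr = (if d r \<ge> r then d r + 1 else d r);
         jt = (if int (d t) \<ge> int t - 1 then d t + 2 else d t + 1);
         c1 = (\<lambda>k::nat. (if r \<le> k then 1 else 0) + (if jt \<le> k then 1 else 0) :: int);
         cm1 = (\<lambda>k::nat. (if t \<le> k then 1 else 0) + (if jr \<le> k then 1 else 0) :: int)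
     in (\<forall>k. k \<le> min (mval n d) (mval n e) \<longrightarrow> Delta n e k = Delta n d k + c1 k - cm1 k)
        \<and> (mval n e > mval n d \<longrightarrow> Delta n e (mval n e) = Delta n d (mval n d) + 2)"
proof -
  interpret unit_transformation n r t d e
    using assms by unfold_locales (auto simp: degseq_def)
  show ?thesis
    unfolding Let_def using Delta_e_le_mval Delta_e_mval_increase
    by (simp add: jr_def jt_def)
qed

end
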